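(* Let $q$ be a prime power, $M\geq 2$ an integer, $n\geq1$, and let $A\in\mathrm{Sp}(2n,q)$ have characteristic polynomial $f$ which is a SRIM polynomial of degree $2n$. Then the equation $\alpha^M=A$ has a solution $\alpha\in\mathrm{Sp}(2n,q)$ if and only if $f$ is an $M^*$-power SRIM polynomial.
   Context: For a monic polynomial $f$ of degree $r$ with $f(0)\neq0$, $f^*(x)=f(0)^{-1}x^rf(x^{-1})$; $f$ is self-reciprocal if $f=f^*$. SRIM means self-reciprocal irreducible monic. A SRIM polynomial $f$ of degree $2k$ ($k\ge1$) is an $M^*$-power SRIM polynomial if $f(x^M)$ has a SRIM factor of degree $2k$. $\mathrm{Sp}(2n,q)$ is the symplectic group of a non-degenerate alternating form on $\mathbb{F}_q^{2n}$. *)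

theory Defs
  imports "Jordan_Normal_Form.Char_Poly" "HOL-Computational_Algebra.Polynomial"
begin

definition recip_poly :: "'a::field poly \<Rightarrow> 'a poly" where
  "recip_poly f = Polynomial.smult (inverse (coeff f 0)) (reflect_poly f)"

definition self_reciprocal :: "'a::field poly \<Rightarrow> bool" where
  "self_reciprocal f \<longleftrightarrow> coeff f 0 \<noteq> 0 \<and> recip_poly f = f"

definition srim :: "'a::field poly \<Rightarrow> bool" where
  "srim f \<longleftrightarrow> monic f \<and> irreducible f \<and> self_reciprocal f"

definition Mstar_power_srim :: "nat \<Rightarrow> 'a::field poly \<Rightarrow> bool" where
  "Mstar_power_srim M f \<longleftrightarrow> srim f \<and> even (degree f) \<and> degree f \<ge> 2 \<and>
     (\<exists>g. srim g \<and> degree g = degree f \<and> g dvd pcompose f (monom 1 M))"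

definition nondeg_alternating :: "nat \<Rightarrow> 'a::field mat \<Rightarrow> bool" where
  "nondeg_alternating m J \<longleftrightarrow> J \<in> carrier_mat m m \<and> transpose_mat J = - J
     \<and> (\<forall>i<m. J $$ (i, i) = 0) \<and> det J \<noteq> 0"

definition Sp_group :: "nat \<Rightarrow> 'a::field mat \<Rightarrow> 'a mat set" where
  "Sp_group m J = {A \<in> carrier_mat m m. transpose_mat A * J * A = J}"

end

(* Since the characteristic polynomial f of A is irreducible, p |-> p(A) identifies the field
   K = F[x]/(f) with the algebra F[A]. If alpha^M = A, then A lies in F[alpha], and counting
   dimensions shows alpha = r(A) for a polynomial r. Writing s for an inverse of x modulo f, the
   relation A^T J = J A^-1 translates "alpha is symplectic" into r(s) r = 1 (mod f) and
   "alpha^M = A" into r^M = x (mod f): alpha corresponds to an M-th root rho of x in K of norm one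
   for the involution x |-> x^-1. Given rho, its minimal polynomial g (the characteristic
   polynomial of alpha) divides f(x^M) because rho^M = x, and g is self-reciprocal because rho^-1
   is again a root of g. Conversely, if a SRIM g of the same degree divides f(x^M), then
   x |-> x^M induces an isomorphism F[x]/(f) -> F[x]/(g); the preimage of x is an M-th root of x,
   and it has norm one because x |-> x^-1 is compatible with this isomorphism when g is
   self-reciprocal. *)

theory Submission
  imports Defs "HOL-Computational_Algebra.Polynomial_Factorial" "HOL-Number_Theory.Cong"
begin

section \<open>Polynomial congruences and residue rings\<close>

lemma pcompose_power: "pcompose (p ^ n) q = pcompose p q ^ n"
  for p q :: "'a::comm_ring_1 poly"
  by (induction n) (simp_all add: pcompose_mult pcompose_1)

lemma pcompose_X: "pcompose [:0, 1:] q = q"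
  for q :: "'a::comm_ring_1 poly"
  by (simp add: pcompose_pCons)

lemma pcompose_monom_1: "pcompose (monom 1 M) q = q ^ M"
  for q :: "'a::comm_ring_1 poly"
  by (simp add: monom_altdef pcompose_power pcompose_X)

lemma pcompose_cong_right:
  fixes a b h :: "'a::field poly"
  assumes "[a = b] (mod h)"
  shows "[pcompose p a = pcompose p b] (mod h)"
proof (induction p)
  case (pCons c p)
  have "[[:c:] + a * pcompose p a = [:c:] + b * pcompose p b] (mod h)"
    using assms pCons.IH by (intro cong_add cong_mult) auto
  then show ?case by (simp add: pcompose_pCons)
qed simp

lemma dvd_pcompose_trans:
  fixes f g p t :: "'a::comm_ring_1 poly"
  assumes "f dvd p" and "g dvd pcompose f t"
  shows "g dvd pcompose p t"
  using assms by (auto elim!: dvdE simp: pcompose_mult)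

lemma pcompose_cong_left:
  fixes a b g h t :: "'a::field poly"
  assumes "[a = b] (mod g)" and "h dvd pcompose g t"
  shows "[pcompose a t = pcompose b t] (mod h)"
  using assms dvd_pcompose_trans[of g "a - b" h t]
  by (simp add: cong_iff_dvd_diff pcompose_diff)

lemma reflect_poly_pcompose_cong:
  fixes c d h :: "'a::field poly"
  assumes cd: "[c * d = 1] (mod h)"
  shows "[c ^ degree p * pcompose p d = pcompose (reflect_poly p) c] (mod h)"
proof (induction p)
  case (pCons a p)
  show ?case
  proof (cases "p = 0")
    case False
    define Y where "Y = c ^ degree p * pcompose p d"
    let ?a = "Polynomial.smult a (c ^ Suc (degree p))"
    have "c ^ degree (pCons a p) * pcompose (pCons a p) d = ?a + (c * d) * Y"
      using False unfolding Y_def by (simp add: pcompose_pCons algebra_simps)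
    also have "[\<dots> = ?a + 1 * pcompose (reflect_poly p) c] (mod h)"
      using cd pCons.IH unfolding Y_def by (intro cong_add cong_mult) auto
    also have "?a + 1 * pcompose (reflect_poly p) c = pcompose (reflect_poly (pCons a p)) c"
      using False
      by (simp add: reflect_poly_pCons' pcompose_add monom_altdef pcompose_smult pcompose_power pcompose_X)
    finally show ?thesis .
  qed simp
qed simp

lemma self_reciprocal_reflect_poly:
  fixes h :: "'a::field poly"
  assumes "self_reciprocal h"
  shows "reflect_poly h = Polynomial.smult (coeff h 0) h"
  using assms by (simp add: self_reciprocal_def recip_poly_def) (metis smult_smult right_inverse smult_1_left)

lemma not_dvd_X_if_degree_ge_2:
  fixes h :: "'a::field poly"
  assumes "2 \<le> degree h"
  shows "\<not> h dvd [:0, 1:]"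
  using assms dvd_imp_degree_le[of h "[:0, 1:]"] by auto

lemma self_reciprocal_dvd_pcompose_inverse:
  fixes h t :: "'a::field poly"
  assumes irr: "irreducible h" and deg: "2 \<le> degree h" and sr: "self_reciprocal h"
    and t: "[t * [:0, 1:] = 1] (mod h)"
  shows "h dvd pcompose h t"
proof -
  have "[[:0, 1:] * t = 1] (mod h)" using t by (simp add: mult.commute)
  then have "[[:0, 1:] ^ degree h * pcompose h t = Polynomial.smult (coeff h 0) h] (mod h)"
    using reflect_poly_pcompose_cong[of "[:0, 1:]" t h h] self_reciprocal_reflect_poly[OF sr] by simp
  also have "[Polynomial.smult (coeff h 0) h = 0] (mod h)" by (simp add: cong_0_iff dvd_smult)
  finally have "h dvd [:0, 1:] ^ degree h * pcompose h t" by (simp add: cong_0_iff)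
  moreover have "prime_elem h" using irr by (rule field_poly_irreducible_imp_prime)
  ultimately show ?thesis
    using not_dvd_X_if_degree_ge_2[OF deg] by (metis prime_elem_dvd_mult_iff prime_elem_dvd_power)
qed

lemma cong_inverse_X:
  fixes h :: "'a::field poly"
  assumes "coeff h 0 \<noteq> 0"
  shows "\<exists>t. [t * [:0, 1:] = 1] (mod h)"
proof -
  obtain a p where h: "h = pCons a p" and a: "a \<noteq> 0" using assms by (cases h) auto
  define t where "t = Polynomial.smult (- inverse a) p"
  have "t * [:0, 1:] - 1 = Polynomial.smult (- inverse a) h"
    unfolding t_def h using a by (simp add: poly_eq_iff coeff_pCons split: nat.split)
  then have "h dvd t * [:0, 1:] - 1" by (simp add: dvd_smult)
  then show ?thesis by (auto simp: cong_iff_dvd_diff)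
qed

lemma irreducible_degree_pos:
  fixes f :: "'a::field poly"
  assumes "irreducible f"
  shows "0 < degree f"
  using assms by (metis irreducible_def is_unit_iff_degree neq0_conv)

definition residues :: "'a::zero poly \<Rightarrow> 'a poly set" where
  "residues f = {p. degree p < degree f}"

lemma finite_residues: "finite (residues (f :: 'a::{finite,zero} poly))"
proof -
  have "residues f \<subseteq> Poly ` {xs. set xs \<subseteq> UNIV \<and> length xs \<le> degree f}"
  proof
    fix p assume "p \<in> residues f"
    then have "length (coeffs p) \<le> degree f"
      by (cases "p = 0") (auto simp: residues_def length_coeffs)
    then show "p \<in> Poly ` {xs. set xs \<subseteq> UNIV \<and> length xs \<le> degree f}"
      by (intro image_eqI[of _ _ "coeffs p"]) auto
  qed
  then show ?thesis by (rule finite_subset) (intro finite_imageI finite_lists_length_le finite_UNIV)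
qed

lemma mod_in_residues:
  fixes f p :: "'a::field poly"
  assumes "0 < degree f"
  shows "p mod f \<in> residues f"
proof -
  have "f \<noteq> 0" using assms by auto
  then show ?thesis
    using assms degree_mod_less[of f p] by (cases "p mod f = 0") (auto simp: residues_def)
qed

lemma residues_cong_imp_eq:
  fixes f p q :: "'a::field poly"
  assumes "[p = q] (mod f)" "p \<in> residues f" "q \<in> residues f"
  shows "p = q"
proof (rule ccontr)
  assume "p \<noteq> q"
  then have "degree f \<le> degree (p - q)"
    using assms(1) by (intro dvd_imp_degree_le) (auto simp: cong_iff_dvd_diff)
  moreover have "degree (p - q) < degree f"
    using assms(2,3) by (intro degree_diff_less) (auto simp: residues_def)
  ultimately show False by simp
qed

lemma inj_on_residue_map_iff:
  fixes f g :: "'a::field poly" and \<Phi> :: "'a poly \<Rightarrow> 'a poly"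
  assumes deg: "0 < degree f"
    and diff: "\<And>p q. \<Phi> (p - q) = \<Phi> p - \<Phi> q" and resp: "\<And>p. f dvd p \<Longrightarrow> g dvd \<Phi> p"
  shows "inj_on (\<lambda>p. \<Phi> p mod g) (residues f) \<longleftrightarrow> (\<forall>p. g dvd \<Phi> p \<longrightarrow> f dvd p)"
proof
  assume inj: "inj_on (\<lambda>p. \<Phi> p mod g) (residues f)"
  show "\<forall>p. g dvd \<Phi> p \<longrightarrow> f dvd p"
  proof (intro allI impI)
    fix p assume "g dvd \<Phi> p"
    moreover have "g dvd \<Phi> p - \<Phi> (p mod f)" using resp[OF dvd_minus_mod] by (simp add: diff)
    ultimately have "g dvd \<Phi> p - (\<Phi> p - \<Phi> (p mod f))" by (rule dvd_diff)
    then have "\<Phi> (p mod f) mod g = \<Phi> 0 mod g" using diff[of 0 0] by simp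
    moreover have "0 \<in> residues f" using deg by (simp add: residues_def)
    ultimately have "p mod f = 0" by (rule inj_onD[OF inj _ mod_in_residues[OF deg]])
    then show "f dvd p" by (simp add: mod_eq_0_iff_dvd)
  qed
next
  assume ker: "\<forall>p. g dvd \<Phi> p \<longrightarrow> f dvd p"
  show "inj_on (\<lambda>p. \<Phi> p mod g) (residues f)"
  proof (rule inj_onI)
    fix p q assume pq: "p \<in> residues f" "q \<in> residues f" "\<Phi> p mod g = \<Phi> q mod g"
    then have "g dvd \<Phi> (p - q)" by (simp add: diff mod_eq_dvd_iff)
    then have "[p = q] (mod f)" using ker by (simp add: cong_iff_dvd_diff)
    then show "p = q" using pq(1,2) by (rule residues_cong_imp_eq)
  qed
qed

lemma residue_map_image_iff:
  fixes f g :: "'a::field poly" and \<Phi> :: "'a poly \<Rightarrow> 'a poly"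
  assumes deg: "degree g = degree f" "0 < degree f"
    and diff: "\<And>p q. \<Phi> (p - q) = \<Phi> p - \<Phi> q" and resp: "\<And>p. f dvd p \<Longrightarrow> g dvd \<Phi> p"
  shows "(\<lambda>p. \<Phi> p mod g) ` residues f = residues g \<longleftrightarrow> (\<forall>u. \<exists>w. [\<Phi> w = u] (mod g))"
proof -
  have g0: "0 < degree g" using deg by simp
  show ?thesis
  proof
    assume onto: "(\<lambda>p. \<Phi> p mod g) ` residues f = residues g"
    show "\<forall>u. \<exists>w. [\<Phi> w = u] (mod g)"
    proof
      fix u
      have "u mod g \<in> (\<lambda>p. \<Phi> p mod g) ` residues f" using onto mod_in_residues[OF g0] by simp
      then obtain w where "u mod g = \<Phi> w mod g" by blast
      then show "\<exists>w. [\<Phi> w = u] (mod g)" unfolding cong_def by (intro exI) (rule sym)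
    qed
  next
    assume surj: "\<forall>u. \<exists>w. [\<Phi> w = u] (mod g)"
    have "residues g \<subseteq> (\<lambda>p. \<Phi> p mod g) ` residues f"
    proof
      fix u assume u: "u \<in> residues g"
      obtain w where w: "[\<Phi> w = u] (mod g)" using surj by blast
      have "[\<Phi> w = \<Phi> (w mod f)] (mod g)"
        using resp[OF dvd_minus_mod] by (simp add: diff cong_iff_dvd_diff)
      then have "\<Phi> (w mod f) mod g = u mod g" using cong_trans[OF cong_sym w] by (simp add: cong_def)
      also have "\<dots> = u" using u by (simp add: residues_def mod_poly_less)
      finally show "u \<in> (\<lambda>p. \<Phi> p mod g) ` residues f" using mod_in_residues[OF deg(2)] by blast
    qed
    moreover have "(\<lambda>p. \<Phi> p mod g) ` residues f \<subseteq> residues g"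
      using mod_in_residues[OF g0] by blast
    ultimately show "(\<lambda>p. \<Phi> p mod g) ` residues f = residues g" by blast
  qed
qed

text \<open>The two sides say that the map \<open>F[x]/(f) \<rightarrow> F[x]/(g)\<close> induced by \<open>\<Phi>\<close> is injective,
  resp. surjective; both residue rings are finite of the same size.\<close>
lemma residue_map_inj_iff_surj:
  fixes f g :: "'a::{finite,field} poly" and \<Phi> :: "'a poly \<Rightarrow> 'a poly"
  assumes deg: "degree g = degree f" "0 < degree f"
    and diff: "\<And>p q. \<Phi> (p - q) = \<Phi> p - \<Phi> q" and resp: "\<And>p. f dvd p \<Longrightarrow> g dvd \<Phi> p"
  shows "(\<forall>p. g dvd \<Phi> p \<longrightarrow> f dvd p) \<longleftrightarrow> (\<forall>u. \<exists>w. [\<Phi> w = u] (mod g))"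
proof -
  let ?\<phi> = "\<lambda>p. \<Phi> p mod g"
  have S: "residues g = residues f" using deg(1) by (simp add: residues_def)
  have "0 < degree g" using deg by simp
  then have into: "?\<phi> ` residues f \<subseteq> residues f" using mod_in_residues[of g] S by blast
  have "inj_on ?\<phi> (residues f) \<longleftrightarrow> ?\<phi> ` residues f = residues f"
  proof
    assume "inj_on ?\<phi> (residues f)"
    then show "?\<phi> ` residues f = residues f" by (rule endo_inj_surj[OF finite_residues into])
  next
    assume "?\<phi> ` residues f = residues f"
    then show "inj_on ?\<phi> (residues f)" by (intro eq_card_imp_inj_on[OF finite_residues]) simp
  qed
  with inj_on_residue_map_iff[OF deg(2) diff resp] residue_map_image_iff[OF deg diff resp] S
  show ?thesis by (simp only:)
qed

lemma cong_inverse_irreducible: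
  fixes f p :: "'a::{finite,field} poly"
  assumes irr: "irreducible f" and nd: "\<not> f dvd p"
  shows "\<exists>u. [u * p = 1] (mod f)"
proof -
  have "prime_elem f" using irr by (rule field_poly_irreducible_imp_prime)
  then have "\<forall>u. f dvd u * p \<longrightarrow> f dvd u" using nd by (simp add: prime_elem_dvd_mult_iff)
  moreover have "0 < degree f" using irr by (rule irreducible_degree_pos)
  ultimately have "\<forall>v. \<exists>u. [u * p = v] (mod f)"
    using residue_map_inj_iff_surj[of f f "\<lambda>u. u * p"] by (simp add: left_diff_distrib)
  then show ?thesis by blast
qed

lemma dvd_of_dvd_pcompose:
  fixes f g p t :: "'a::{finite,field} poly"
  assumes irr: "irreducible f" and g: "\<not> is_unit g"
    and gf: "g dvd pcompose f t" and gp: "g dvd pcompose p t"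
  shows "f dvd p"
proof (rule ccontr)
  assume "\<not> f dvd p"
  then obtain u where "[u * p = 1] (mod f)" using irr cong_inverse_irreducible by blast
  then have "[pcompose (u * p) t = pcompose 1 t] (mod g)" using gf by (rule pcompose_cong_left)
  then have "[pcompose u t * pcompose p t = 1] (mod g)" by (simp add: pcompose_mult pcompose_1)
  moreover have "[pcompose u t * pcompose p t = 0] (mod g)" using gp by (simp add: cong_0_iff)
  ultimately have "[0 = 1] (mod g)" by (metis cong_sym cong_trans)
  then show False using g by (simp add: cong_0_iff cong_sym_eq)
qed

lemma cong_inverse_unique:
  fixes a b c m :: "'a::unique_euclidean_ring"
  assumes "[a * c = 1] (mod m)" and "[b * c = 1] (mod m)"
  shows "[a = b] (mod m)"
proof -
  have "[a * (b * c) = a * 1] (mod m)" using assms(2) by (rule cong_scalar_left)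
  moreover have "[b * (a * c) = b * 1] (mod m)" using assms(1) by (rule cong_scalar_left)
  moreover have "a * (b * c) = b * (a * c)" by (simp add: ac_simps)
  ultimately show ?thesis by (metis cong_sym cong_trans mult_1_right)
qed

lemma monic_eq_if_dvd:
  fixes a b :: "'a::field poly"
  assumes "monic a" "monic b" "degree a = degree b" "a dvd b"
  shows "a = b"
proof -
  obtain k where k: "b = a * k" using assms(4) by (elim dvdE)
  have "a \<noteq> 0" "k \<noteq> 0" using assms(2) k by auto
  then have "degree k = 0" using k assms(3) degree_mult_eq[of a k] by simp
  moreover have "lead_coeff k = 1" using k assms(1,2) by (simp add: lead_coeff_mult)
  ultimately have "k = 1" by (metis leading_coeff_0_iff degree_0_id one_pCons)
  then show ?thesis using k by simp
qed

lemma self_reciprocal_if_dvd_reflect_poly: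
  fixes g :: "'a::field poly"
  assumes mon: "monic g" and g0: "coeff g 0 \<noteq> 0" and dvd: "g dvd reflect_poly g"
  shows "self_reciprocal g"
proof -
  have "monic (recip_poly g)" and "degree (recip_poly g) = degree g"
    using g0 by (simp_all add: recip_poly_def coeff_reflect_poly)
  moreover have "g dvd recip_poly g" using dvd by (simp add: recip_poly_def dvd_smult)
  ultimately have "g = recip_poly g" using mon by (intro monic_eq_if_dvd) auto
  then show ?thesis using g0 by (simp add: self_reciprocal_def)
qed

lemma irreducible_coeff_0_nonzero:
  fixes g :: "'a::field poly"
  assumes irr: "irreducible g" and deg: "2 \<le> degree g"
  shows "coeff g 0 \<noteq> 0"
proof
  assume "coeff g 0 = 0"
  then have "[:0, 1:] dvd g" using monom_1_dvd_iff'[of 1 g] by (simp add: monom_Suc one_pCons)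
  moreover have "\<not> is_unit [:0, 1::'a:]" by (simp add: is_unit_iff_degree)
  ultimately have "g dvd [:0, 1:]" using irr irreducibleD' by blast
  then show False using not_dvd_X_if_degree_ge_2[OF deg] by simp
qed

lemma irreducible_minimal_poly:
  fixes f g r :: "'a::field poly"
  assumes firr: "irreducible f" and deg: "0 < degree g" and root: "f dvd pcompose g r"
    and minimal: "\<And>p. f dvd pcompose p r \<Longrightarrow> g dvd p"
  shows "irreducible g"
proof (rule irreducibleI)
  show "g \<noteq> 0" and "\<not> is_unit g" using deg by (auto simp: is_unit_iff_degree)
next
  fix a b assume ab: "g = a * b"
  then have "a \<noteq> 0" "b \<noteq> 0" using deg by auto
  have "prime_elem f" using firr by (rule field_poly_irreducible_imp_prime)
  then have "f dvd pcompose a r \<or> f dvd pcompose b r"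
    using root ab by (simp add: pcompose_mult prime_elem_dvd_mult_iff)
  then have "degree g \<le> degree a \<or> degree g \<le> degree b"
    using minimal dvd_imp_degree_le \<open>a \<noteq> 0\<close> \<open>b \<noteq> 0\<close> by blast
  then have "degree a = 0 \<or> degree b = 0"
    using ab degree_mult_eq[OF \<open>a \<noteq> 0\<close> \<open>b \<noteq> 0\<close>] by auto
  then show "is_unit a \<or> is_unit b" using \<open>a \<noteq> 0\<close> \<open>b \<noteq> 0\<close> by (simp add: is_unit_iff_degree)
qed

section \<open>Unitary roots and self-reciprocal factors\<close>

text \<open>With \<open>s\<close> an inverse of \<open>x\<close> modulo an irreducible \<open>f\<close>, \<open>pcompose r s\<close> is the image of \<open>r\<close>
  under the involution \<open>x \<mapsto> x\<^sup>-\<^sup>1\<close> of \<open>F[x]/(f)\<close>. A unitary root is an \<open>M\<close>-th root of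
  \<open>x\<close> of norm one for this involution: the residue-ring picture of a symplectic
  \<open>M\<close>-th root of a matrix with characteristic polynomial \<open>f\<close>.\<close>
definition unitary_root :: "nat \<Rightarrow> 'a::field poly \<Rightarrow> 'a poly \<Rightarrow> 'a poly \<Rightarrow> bool" where
  "unitary_root M f s r \<longleftrightarrow> [r ^ M = [:0, 1:]] (mod f) \<and> [pcompose r s * r = 1] (mod f)"

lemma norm_pcompose_monom_cong_1:
  fixes f g r s :: "'a::field poly"
  assumes girr: "irreducible g" and gsr: "self_reciprocal g" and deg: "2 \<le> degree g"
    and gdvd: "g dvd pcompose f (monom 1 M)" and s: "[s * [:0, 1:] = 1] (mod f)"
    and r: "[pcompose r (monom 1 M) = [:0, 1:]] (mod g)"
  shows "[pcompose (pcompose r s * r) (monom 1 M) = 1] (mod g)"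
proof -
  let ?X = "[:0, 1:] :: 'a poly" and ?XM = "monom 1 M :: 'a poly"
  obtain t where t: "[t * ?X = 1] (mod g)"
    using cong_inverse_X gsr by (auto simp: self_reciprocal_def)
  have gt: "g dvd pcompose g t" using self_reciprocal_dvd_pcompose_inverse[OF girr deg gsr t] .
  have "[pcompose (s * ?X) ?XM = pcompose 1 ?XM] (mod g)" using s gdvd by (rule pcompose_cong_left)
  then have "[pcompose s ?XM * ?XM = 1] (mod g)"
    by (simp add: pcompose_mult pcompose_X pcompose_1 mult.commute)
  moreover have "[(t * ?X) ^ M = 1 ^ M] (mod g)" using t by (rule cong_pow)
  then have "[t ^ M * ?XM = 1] (mod g)"
    by (simp only: power_mult_distrib power_one monom_altdef smult_1_left)
  ultimately have "[pcompose s ?XM = t ^ M] (mod g)" by (rule cong_inverse_unique)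
  then have "[pcompose (pcompose r s) ?XM = pcompose r (t ^ M)] (mod g)"
    by (simp add: pcompose_assoc[symmetric] pcompose_cong_right)
  also have "pcompose r (t ^ M) = pcompose (pcompose r ?XM) t"
    by (simp add: pcompose_assoc[symmetric] pcompose_monom_1)
  also have "[\<dots> = pcompose ?X t] (mod g)" using r gt by (rule pcompose_cong_left)
  finally have "[pcompose (pcompose r s) ?XM = t] (mod g)" by (simp add: pcompose_X)
  then have "[pcompose (pcompose r s) ?XM * pcompose r ?XM = t * ?X] (mod g)"
    using r by (rule cong_mult)
  then show ?thesis using t by (simp add: pcompose_mult cong_trans)
qed

lemma unitary_root_of_srim_factor:
  fixes f g s :: "'a::{finite,field} poly"
  assumes firr: "irreducible f" and deg: "2 \<le> degree f"
    and girr: "irreducible g" and gsr: "self_reciprocal g" and degg: "degree g = degree f"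
    and gdvd: "g dvd pcompose f (monom 1 M)"
    and s: "[s * [:0, 1:] = 1] (mod f)"
  shows "\<exists>r. unitary_root M f s r"
proof -
  let ?X = "[:0, 1:] :: 'a poly" and ?XM = "monom 1 M :: 'a poly"
  have ker: "\<forall>p. g dvd pcompose p ?XM \<longrightarrow> f dvd p"
    using dvd_of_dvd_pcompose[OF firr _ gdvd] girr by (auto simp: irreducible_def)
  then have "\<forall>u. \<exists>w. [pcompose w ?XM = u] (mod g)"
    using residue_map_inj_iff_surj[of g f "\<lambda>p. pcompose p ?XM"] degg deg
      dvd_pcompose_trans[OF _ gdvd] by (simp add: pcompose_diff)
  then obtain r where r: "[pcompose r ?XM = ?X] (mod g)" by blast
  have "[pcompose r ?XM ^ M = ?X ^ M] (mod g)" using r by (rule cong_pow)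
  then have "g dvd pcompose (r ^ M - ?X) ?XM"
    by (simp add: cong_iff_dvd_diff pcompose_diff pcompose_power pcompose_X monom_altdef)
  then have "[r ^ M = ?X] (mod f)" using ker by (simp add: cong_iff_dvd_diff)
  moreover have "[pcompose (pcompose r s * r) ?XM = 1] (mod g)"
    using norm_pcompose_monom_cong_1[OF girr gsr _ gdvd s r] degg deg by simp
  then have "[pcompose r s * r = 1] (mod f)"
    using ker by (simp add: cong_iff_dvd_diff pcompose_diff pcompose_1)
  ultimately show ?thesis unfolding unitary_root_def by blast
qed

lemma srim_factor_of_unitary_root:
  fixes f g r s :: "'a::{finite,field} poly"
  assumes firr: "irreducible f" and fsr: "self_reciprocal f" and deg: "2 \<le> degree f"
    and s: "[s * [:0, 1:] = 1] (mod f)" and r: "unitary_root M f s r"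
    and gm: "monic g" and degg: "degree g = degree f" and gr: "f dvd pcompose g r"
  shows "srim g \<and> g dvd pcompose f (monom 1 M)"
proof -
  let ?XM = "monom 1 M :: 'a poly"
  have root: "[r ^ M = [:0, 1:]] (mod f)" and unit: "[pcompose r s * r = 1] (mod f)"
    using r by (auto simp: unitary_root_def)
  have "[pcompose (pcompose u ?XM) r = u] (mod f)" for u
    using pcompose_cong_right[OF root, of u] by (simp add: pcompose_assoc[symmetric] pcompose_monom_1)
  then have minimal: "\<forall>p. f dvd pcompose p r \<longrightarrow> g dvd p"
    using residue_map_inj_iff_surj[of f g "\<lambda>p. pcompose p r"] degg deg
      dvd_pcompose_trans[OF _ gr] by (auto simp: pcompose_diff)
  have "[pcompose (pcompose f ?XM) r = f] (mod f)"
    using pcompose_cong_right[OF root, of f] by (simp add: pcompose_assoc[symmetric] pcompose_monom_1)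
  then have gf: "g dvd pcompose f ?XM" using minimal by (simp add: cong_def mod_eq_0_iff_dvd)
  have girr: "irreducible g" using irreducible_minimal_poly[OF firr _ gr] minimal degg deg by auto
  have g0: "coeff g 0 \<noteq> 0" using irreducible_coeff_0_nonzero[OF girr] degg deg by simp
  have "f dvd pcompose f s" by (rule self_reciprocal_dvd_pcompose_inverse[OF firr deg fsr s])
  moreover have "[pcompose g r = 0] (mod f)" using gr by (simp add: cong_0_iff)
  ultimately have "[pcompose g (pcompose r s) = 0] (mod f)"
    using pcompose_cong_left[of "pcompose g r" 0 f f s] by (simp add: pcompose_assoc)
  moreover have "[r * pcompose r s = 1] (mod f)" using unit by (simp add: mult.commute)
  then have "[r ^ degree g * pcompose g (pcompose r s) = pcompose (reflect_poly g) r] (mod f)"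
    by (rule reflect_poly_pcompose_cong)
  ultimately have "f dvd pcompose (reflect_poly g) r"
    by (metis cong_0_iff cong_scalar_left cong_sym cong_trans mult_zero_right)
  then have "self_reciprocal g"
    using minimal self_reciprocal_if_dvd_reflect_poly[OF gm g0] by blast
  then show ?thesis using gm girr gf by (simp add: srim_def)
qed

section \<open>Polynomials evaluated at matrices\<close>

definition poly_mat :: "'a::comm_ring_1 poly \<Rightarrow> 'a mat \<Rightarrow> 'a mat" where
  "poly_mat p A = fold_coeffs (\<lambda>a B. a \<cdot>\<^sub>m 1\<^sub>m (dim_row A) + A * B) p (0\<^sub>m (dim_row A) (dim_row A))"

lemma poly_mat_0 [simp]: "poly_mat 0 A = 0\<^sub>m (dim_row A) (dim_row A)"
  by (simp add: poly_mat_def)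

lemma poly_mat_pCons_if:
  "poly_mat (pCons a p) A = (if a = 0 \<and> p = 0 then 0\<^sub>m (dim_row A) (dim_row A)
     else a \<cdot>\<^sub>m 1\<^sub>m (dim_row A) + A * poly_mat p A)"
  by (auto simp: poly_mat_def)

lemma dim_poly_mat [simp]:
  "dim_row (poly_mat p A) = dim_row A" "dim_col (poly_mat p A) = dim_row A"
  by (induction p) (auto simp: poly_mat_pCons_if)

lemma poly_mat_carrier [simp]: "A \<in> carrier_mat k k \<Longrightarrow> poly_mat p A \<in> carrier_mat k k"
  by (intro carrier_matI) auto

lemma poly_mat_pCons:
  assumes A: "A \<in> carrier_mat k k"
  shows "poly_mat (pCons a p) A = a \<cdot>\<^sub>m 1\<^sub>m k + A * poly_mat p A"
proof (cases "a = 0 \<and> p = 0")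
  case True
  then show ?thesis using A by (intro eq_matI) simp_all
next
  case False
  then show ?thesis using A by (simp only: poly_mat_pCons_if if_not_P[OF False]) simp
qed

lemma poly_mat_const: "A \<in> carrier_mat k k \<Longrightarrow> poly_mat [:c:] A = c \<cdot>\<^sub>m 1\<^sub>m k"
  by (simp add: poly_mat_pCons)

lemma poly_mat_1: "A \<in> carrier_mat k k \<Longrightarrow> poly_mat 1 A = 1\<^sub>m k"
  by (simp add: one_pCons poly_mat_const) (intro eq_matI; simp)

lemma poly_mat_X: "A \<in> carrier_mat k k \<Longrightarrow> poly_mat [:0, 1:] A = A"
  by (simp add: poly_mat_pCons poly_mat_const) (intro eq_matI; simp)

lemma poly_mat_add:
  assumes A: "A \<in> carrier_mat k k"
  shows "poly_mat (p + q) A = poly_mat p A + poly_mat q A"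
proof (induction p arbitrary: q)
  case (pCons a p)
  obtain b q' where q: "q = pCons b q'" by (cases q) auto
  have "poly_mat (pCons a p + q) A = (a + b) \<cdot>\<^sub>m 1\<^sub>m k + (A * poly_mat p A + A * poly_mat q' A)"
    using A by (simp add: q poly_mat_pCons pCons.IH
        mult_add_distrib_mat[OF A poly_mat_carrier[OF A] poly_mat_carrier[OF A]])
  also have "\<dots> = poly_mat (pCons a p) A + poly_mat q A"
    using A by (simp add: q poly_mat_pCons) (intro eq_matI; simp add: algebra_simps)
  finally show ?case .
qed (use A in simp)

lemma poly_mat_smult:
  assumes A: "A \<in> carrier_mat k k"
  shows "poly_mat (Polynomial.smult c p) A = c \<cdot>\<^sub>m poly_mat p A"
proof (induction p)
  case (pCons a p)
  have "poly_mat (Polynomial.smult c (pCons a p)) A = (c * a) \<cdot>\<^sub>m 1\<^sub>m k + c \<cdot>\<^sub>m (A * poly_mat p A)"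
    using A by (simp add: poly_mat_pCons pCons.IH mult_smult_distrib[OF A poly_mat_carrier[OF A]])
  also have "\<dots> = c \<cdot>\<^sub>m poly_mat (pCons a p) A"
    using A by (simp add: poly_mat_pCons) (intro eq_matI; simp add: algebra_simps)
  finally show ?case .
qed (use A in simp)

lemma poly_mat_mult:
  assumes A: "A \<in> carrier_mat k k"
  shows "poly_mat (p * q) A = poly_mat p A * poly_mat q A"
proof (induction p)
  case (pCons a p)
  have P: "poly_mat p A \<in> carrier_mat k k" and Q: "poly_mat q A \<in> carrier_mat k k" using A by auto
  have "poly_mat (pCons a p * q) A
      = a \<cdot>\<^sub>m poly_mat q A + (0 \<cdot>\<^sub>m 1\<^sub>m k + A * (poly_mat p A * poly_mat q A))"
    using A by (simp add: poly_mat_add poly_mat_smult poly_mat_pCons pCons.IH)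
  also have "\<dots> = (a \<cdot>\<^sub>m 1\<^sub>m k) * poly_mat q A + A * poly_mat p A * poly_mat q A"
    using A P Q by (intro eq_matI) (auto simp: assoc_mult_mat[OF A P Q, symmetric])
  also have "\<dots> = (a \<cdot>\<^sub>m 1\<^sub>m k + A * poly_mat p A) * poly_mat q A"
    by (rule add_mult_distrib_mat[symmetric]) (use A P Q in auto)
  finally show ?case using A by (simp add: poly_mat_pCons)
qed (use A in simp)

lemma poly_mat_diff:
  assumes A: "A \<in> carrier_mat k k"
  shows "poly_mat (p - q) A = poly_mat p A - poly_mat q A"
proof -
  have "poly_mat p A = poly_mat (p - q) A + poly_mat q A" using poly_mat_add[OF A, of "p - q" q] by simp
  then show ?thesis using A by (intro eq_matI) auto
qed

lemma poly_mat_power: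
  assumes A: "A \<in> carrier_mat k k"
  shows "poly_mat (p ^ n) A = poly_mat p A ^\<^sub>m n"
proof (induction n)
  case (Suc n)
  have "poly_mat (p ^ Suc n) A = poly_mat (p ^ n) A * poly_mat p A"
    by (simp only: power_Suc2 poly_mat_mult[OF A])
  then show ?case using Suc.IH by simp
qed (use A in \<open>simp add: poly_mat_1\<close>)

lemma poly_mat_pcompose:
  assumes A: "A \<in> carrier_mat k k"
  shows "poly_mat (pcompose p q) A = poly_mat p (poly_mat q A)"
proof (induction p)
  case (pCons a p)
  have B: "poly_mat q A \<in> carrier_mat k k" using A by simp
  show ?case
    using A B by (simp add: pcompose_pCons poly_mat_add poly_mat_mult poly_mat_const
        poly_mat_pCons[OF A] poly_mat_pCons[OF B] pCons.IH)
qed (use A in simp)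

lemma poly_mat_comm:
  assumes A: "A \<in> carrier_mat k k"
  shows "poly_mat p A * poly_mat q A = poly_mat q A * poly_mat p A"
  using A by (simp add: poly_mat_mult[symmetric] mult.commute)

lemma poly_mat_intertwine:
  assumes B: "B \<in> carrier_mat k k" and C: "C \<in> carrier_mat k k" and J: "J \<in> carrier_mat k k"
    and BJ: "B * J = J * C"
  shows "poly_mat p B * J = J * poly_mat p C"
proof (induction p)
  case (pCons a p)
  have P: "poly_mat p B \<in> carrier_mat k k" "poly_mat p C \<in> carrier_mat k k" using B C by auto
  have "poly_mat (pCons a p) B * J = (a \<cdot>\<^sub>m 1\<^sub>m k) * J + (B * poly_mat p B) * J"
    using B J P by (simp add: poly_mat_pCons[OF B]) (rule add_mult_distrib_mat, auto)
  also have "\<dots> = a \<cdot>\<^sub>m J + B * (poly_mat p B * J)"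
    using B J P by (simp add: mult_smult_assoc_mat[OF one_carrier_mat J] assoc_mult_mat[OF B P(1) J])
  also have "\<dots> = a \<cdot>\<^sub>m J + J * (C * poly_mat p C)"
    using B C J P by (simp add: pCons.IH BJ assoc_mult_mat[OF J C P(2)] flip: assoc_mult_mat[OF B J P(2)])
  also have "\<dots> = J * (a \<cdot>\<^sub>m 1\<^sub>m k) + J * (C * poly_mat p C)"
    using J by (simp add: mult_smult_distrib[OF J one_carrier_mat])
  also have "\<dots> = J * poly_mat (pCons a p) C"
    using C J P by (simp add: poly_mat_pCons[OF C]) (rule mult_add_distrib_mat[symmetric], auto)
  finally show ?case .
qed (use B C J in simp)

lemma poly_mat_transpose:
  assumes A: "A \<in> carrier_mat k k"
  shows "transpose_mat (poly_mat p A) = poly_mat p (transpose_mat A)"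
proof (induction p)
  case (pCons a p)
  have P: "poly_mat p A \<in> carrier_mat k k" using A by simp
  have c: "A * poly_mat p A = poly_mat p A * A"
    using poly_mat_comm[OF A, of "[:0, 1:]" p] A by (simp add: poly_mat_X)
  have "transpose_mat (poly_mat (pCons a p) A) = a \<cdot>\<^sub>m 1\<^sub>m k + transpose_mat (A * poly_mat p A)"
    using A P by (simp add: poly_mat_pCons) (intro eq_matI; simp)
  also have "transpose_mat (A * poly_mat p A) = transpose_mat A * poly_mat p (transpose_mat A)"
    using A P by (simp add: c transpose_mult[of _ k k] pCons.IH)
  finally show ?case using A by (simp add: poly_mat_pCons)
qed (use A in simp)

lemma poly_mat_eq_if_coeff_recurrence:
  fixes A :: "'a::comm_ring_1 mat" and C :: "nat \<Rightarrow> 'a mat"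
  assumes A: "A \<in> carrier_mat k k" and C: "\<And>i. C i \<in> carrier_mat k k"
    and vanish: "\<And>i. N \<le> i \<Longrightarrow> C i = 0\<^sub>m k k"
    and rec: "\<And>i. C i = coeff p i \<cdot>\<^sub>m 1\<^sub>m k + A * C (Suc i)"
  shows "poly_mat p A = C 0"
  using C vanish rec
proof (induction p arbitrary: C)
  case 0
  have "C i = 0\<^sub>m k k" if "i \<le> N" for i
    using that
  proof (induction rule: inc_induct)
    case (step i)
    have "C i = 0 \<cdot>\<^sub>m 1\<^sub>m k + A * 0\<^sub>m k k" using "0.prems"(3)[of i] step.IH by simp
    also have "\<dots> = 0\<^sub>m k k" using A by (intro eq_matI) auto
    finally show ?case .
  qed (use "0.prems"(2) in simp)
  then have "C 0 = 0\<^sub>m k k" by simp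
  then show ?case using A by simp
next
  case (pCons a p)
  have "poly_mat p A = C (Suc 0)"
  proof (rule pCons.IH[of "\<lambda>i. C (Suc i)"])
    show "C (Suc i) \<in> carrier_mat k k" for i by (rule pCons.prems(1))
    show "C (Suc i) = 0\<^sub>m k k" if "N \<le> i" for i using pCons.prems(2) that by simp
    show "C (Suc i) = coeff p i \<cdot>\<^sub>m 1\<^sub>m k + A * C (Suc (Suc i))" for i
      using pCons.prems(3)[of "Suc i"] by simp
  qed
  then show ?case using A pCons.prems(3)[of 0] by (simp add: poly_mat_pCons)
qed

lemma coeff_mat_eventually_0:
  fixes D :: "nat \<Rightarrow> nat \<Rightarrow> 'a::zero poly"
  shows "\<exists>N. \<forall>i\<ge>N. mat k k (\<lambda>(a, b). coeff (D a b) i) = 0\<^sub>m k k"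
proof (intro exI allI impI)
  define N where "N = Suc (Max ((\<lambda>(a, b). degree (D a b)) ` ({..<k} \<times> {..<k})))"
  fix i assume i: "N \<le> i"
  show "mat k k (\<lambda>(a, b). coeff (D a b) i) = 0\<^sub>m k k"
  proof (rule eq_matI)
    fix a b assume ab: "a < dim_row (0\<^sub>m k k :: 'a mat)" "b < dim_col (0\<^sub>m k k :: 'a mat)"
    then have "degree (D a b) < N" unfolding N_def by (subst less_Suc_eq_le, intro Max_ge) auto
    then show "mat k k (\<lambda>(a, b). coeff (D a b) i) $$ (a, b) = 0\<^sub>m k k $$ (a, b)"
      using ab i by (simp add: coeff_eq_0)
  qed auto
qed

theorem cayley_hamilton:
  fixes A :: "'a::comm_ring_1 mat"
  assumes A: "A \<in> carrier_mat k k"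
  shows "poly_mat (char_poly A) A = 0\<^sub>m k k"
proof -
  define P where "P = char_poly_matrix A"
  define Q where "Q = adj_mat P"
  define D where "D a b = [:0, 1:] * Q $$ (a, b)" for a b
  define C where "C i = mat k k (\<lambda>(a, b). coeff (D a b) i)" for i
  have P: "P \<in> carrier_mat k k" using A unfolding P_def by simp
  have Q: "Q \<in> carrier_mat k k" using adj_mat(1)[OF P] unfolding Q_def .
  have PQ: "P * Q = char_poly A \<cdot>\<^sub>m 1\<^sub>m k"
    using adj_mat(2)[OF P] unfolding Q_def P_def char_poly_def by simp
  have C: "C i \<in> carrier_mat k k" for i unfolding C_def by simp
  txt \<open>\<open>C i\<close> is the \<open>i\<close>-th coefficient of \<open>x \<cdot> adj(x I - A)\<close>; comparing coefficients in
    \<open>(x I - A) \<cdot> adj(x I - A) = \<chi>\<^sub>A \<cdot> I\<close> gives the recurrence \<open>rec\<close>.\<close>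
  obtain N where vanish: "\<And>i. N \<le> i \<Longrightarrow> C i = 0\<^sub>m k k"
    using coeff_mat_eventually_0[of k D] unfolding C_def by blast
  have rec: "C i = coeff (char_poly A) i \<cdot>\<^sub>m 1\<^sub>m k + A * C (Suc i)" for i
  proof (rule eq_matI)
    fix a b assume "a < dim_row (coeff (char_poly A) i \<cdot>\<^sub>m 1\<^sub>m k + A * C (Suc i))"
      "b < dim_col (coeff (char_poly A) i \<cdot>\<^sub>m 1\<^sub>m k + A * C (Suc i))"
    then have ab: "a < k" "b < k" using A C[of "Suc i"] by auto
    have P_entry: "P $$ (a, l) = (if a = l then [:0, 1:] else 0) - [:A $$ (a, l):]" if "l < k" for l
      using A ab that unfolding P_def char_poly_matrix_def by simp
    have "coeff (char_poly A) i * (if a = b then 1 else 0) = coeff ((P * Q) $$ (a, b)) i"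
      using ab by (simp add: PQ)
    also have "\<dots> = (\<Sum>l = 0..<k. coeff (P $$ (a, l) * Q $$ (l, b)) i)"
      using P Q ab by (simp add: scalar_prod_def coeff_sum)
    also have "\<dots> = (\<Sum>l = 0..<k.
        (if a = l then coeff (D l b) i else 0) - A $$ (a, l) * coeff (D l b) (Suc i))"
      by (intro sum.cong refl) (simp add: P_entry D_def algebra_simps)
    also have "\<dots> = coeff (D a b) i - (A * C (Suc i)) $$ (a, b)"
      using A ab by (simp add: sum_subtractf scalar_prod_def C_def)
    finally show "C i $$ (a, b) = (coeff (char_poly A) i \<cdot>\<^sub>m 1\<^sub>m k + A * C (Suc i)) $$ (a, b)"
      using A C ab by (simp add: C_def algebra_simps)
  qed (use A in \<open>auto simp: C_def\<close>)
  have "C 0 = 0\<^sub>m k k" by (intro eq_matI) (auto simp: C_def D_def)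
  then show ?thesis using poly_mat_eq_if_coeff_recurrence[OF A C vanish rec] by simp
qed

section \<open>Matrices with irreducible characteristic polynomial\<close>

lemma mult_left_cancel_det_nonzero:
  fixes J X Y :: "'a::field mat"
  assumes J: "J \<in> carrier_mat k k" and det: "det J \<noteq> 0"
    and X: "X \<in> carrier_mat k k" and Y: "Y \<in> carrier_mat k k" and eq: "J * X = J * Y"
  shows "X = Y"
proof -
  have aJ: "adj_mat J \<in> carrier_mat k k" and aJJ: "adj_mat J * J = det J \<cdot>\<^sub>m 1\<^sub>m k"
    using adj_mat[OF J] by auto
  have "(adj_mat J * J) * X = (adj_mat J * J) * Y" using aJ J X Y eq by simp
  then have "det J \<cdot>\<^sub>m X = det J \<cdot>\<^sub>m Y" using aJJ X Y by (simp add: mult_smult_assoc_mat[of _ k k])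
  then have "X $$ (i, j) = Y $$ (i, j)" if "i < k" "j < k" for i j
    using that X Y det by (metis index_smult_mat(1) carrier_matD mult_left_cancel)
  then show ?thesis using X Y by (intro eq_matI) auto
qed

lemma poly_mat_cong:
  fixes A :: "'a::field mat"
  assumes A: "A \<in> carrier_mat k k" and f: "poly_mat f A = 0\<^sub>m k k" and pq: "[p = q] (mod f)"
  shows "poly_mat p A = poly_mat q A"
proof -
  from pq obtain h where "p - q = f * h" unfolding cong_iff_dvd_diff by (elim dvdE)
  then have "p = q + f * h" by (simp add: algebra_simps)
  then show ?thesis using A f by (simp add: poly_mat_add poly_mat_mult)
qed

lemma poly_mat_mod_char_poly:
  fixes A :: "'a::field mat"
  assumes A: "A \<in> carrier_mat k k"
  shows "poly_mat (p mod char_poly A) A = poly_mat p A"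
  using poly_mat_cong[OF A cayley_hamilton[OF A]] by simp

lemma poly_mat_eq_iff_cong:
  fixes A :: "'a::{finite,field} mat"
  assumes A: "A \<in> carrier_mat k k" and irr: "irreducible f" and f: "poly_mat f A = 0\<^sub>m k k"
    and k: "0 < k"
  shows "poly_mat p A = poly_mat q A \<longleftrightarrow> [p = q] (mod f)"
proof
  assume eq: "poly_mat p A = poly_mat q A"
  show "[p = q] (mod f)"
  proof (rule ccontr)
    assume "\<not> [p = q] (mod f)"
    then obtain u where "[u * (p - q) = 1] (mod f)"
      using cong_inverse_irreducible[OF irr] by (auto simp: cong_iff_dvd_diff)
    then have "poly_mat (u * (p - q)) A = poly_mat 1 A" by (rule poly_mat_cong[OF A f])
    moreover have "poly_mat (p - q) A = 0\<^sub>m k k"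
      using A eq by (intro eq_matI) (simp_all add: poly_mat_diff)
    ultimately have "0\<^sub>m k k = (1\<^sub>m k :: 'a mat)" using A by (simp add: poly_mat_mult poly_mat_1)
    then show False using k by (metis index_one_mat(1) index_zero_mat(1) zero_neq_one)
  qed
qed (rule poly_mat_cong[OF A f])

text \<open>If \<open>A\<close> is a polynomial in \<open>B\<close> then \<open>F[A] \<subseteq> F[B]\<close>. Irreducibility of the characteristic
  polynomial makes \<open>p \<mapsto> p(A)\<close> injective on polynomials of degree \<open>< k\<close>, so \<open>F[A]\<close> is as large
  as \<open>F[B]\<close> can be, the two coincide, and \<open>B \<in> F[A]\<close>.\<close>
lemma exists_poly_mat_eq_if_irreducible:
  fixes A B :: "'a::{finite,field} mat"
  assumes A: "A \<in> carrier_mat k k" and B: "B \<in> carrier_mat k k"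
    and AB: "A = poly_mat q B" and irr: "irreducible (char_poly A)"
  shows "\<exists>r. B = poly_mat r A"
proof -
  let ?S = "residues (char_poly A)"
  have degA: "degree (char_poly A) = k" and degB: "degree (char_poly B) = k"
    using degree_monic_char_poly[OF A] degree_monic_char_poly[OF B] by auto
  have k: "0 < k" using irreducible_degree_pos[OF irr] degA by simp
  have reduce: "\<exists>p'\<in>?S. poly_mat p' B = poly_mat p B" for p
  proof
    show "p mod char_poly B \<in> ?S" using mod_in_residues[of "char_poly B" p] degA degB k
      by (simp add: residues_def)
  qed (rule poly_mat_mod_char_poly[OF B])
  have inj: "inj_on (\<lambda>p. poly_mat p A) ?S"
  proof (rule inj_onI)
    fix p p' assume "p \<in> ?S" "p' \<in> ?S" "poly_mat p A = poly_mat p' A"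
    then show "p = p'"
      using poly_mat_eq_iff_cong[OF A irr cayley_hamilton[OF A] k] residues_cong_imp_eq by blast
  qed
  have sub: "(\<lambda>p. poly_mat p A) ` ?S \<subseteq> (\<lambda>p. poly_mat p B) ` ?S"
  proof
    fix C assume "C \<in> (\<lambda>p. poly_mat p A) ` ?S"
    then obtain p where "C = poly_mat (pcompose p q) B" using AB B by (auto simp: poly_mat_pcompose)
    then show "C \<in> (\<lambda>p. poly_mat p B) ` ?S" using reduce by (metis image_eqI)
  qed
  have "card ((\<lambda>p. poly_mat p B) ` ?S) \<le> card ((\<lambda>p. poly_mat p A) ` ?S)"
    using card_image_le[OF finite_residues] card_image[OF inj] by simp
  then have "(\<lambda>p. poly_mat p A) ` ?S = (\<lambda>p. poly_mat p B) ` ?S"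
    using finite_residues sub by (intro card_seteq) auto
  moreover have "B \<in> (\<lambda>p. poly_mat p B) ` ?S"
    using reduce[of "[:0, 1:]"] poly_mat_X[OF B] by (metis image_eqI)
  ultimately show ?thesis by auto
qed

lemma transpose_poly_mat_mult:
  fixes A J :: "'a::comm_ring_1 mat"
  assumes A: "A \<in> carrier_mat k k" and J: "J \<in> carrier_mat k k"
    and AJA: "transpose_mat A * J * A = J" and SA: "poly_mat s A * A = 1\<^sub>m k"
  shows "transpose_mat (poly_mat p A) * J = J * poly_mat (pcompose p s) A"
proof -
  let ?S = "poly_mat s A"
  have S: "?S \<in> carrier_mat k k" and At: "transpose_mat A \<in> carrier_mat k k" using A by auto
  have AS: "A * ?S = 1\<^sub>m k" using SA poly_mat_comm[OF A, of s "[:0, 1:]"] A by (simp add: poly_mat_X)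
  have "transpose_mat A * J = (transpose_mat A * J) * (A * ?S)" using AS At J by simp
  also have "\<dots> = J * ?S" using AJA assoc_mult_mat[OF mult_carrier_mat[OF At J] A S] by simp
  finally have "poly_mat p (transpose_mat A) * J = J * poly_mat p ?S"
    by (rule poly_mat_intertwine[OF At S J])
  then show ?thesis using A by (simp add: poly_mat_transpose poly_mat_pcompose)
qed

lemma symplectic_root_iff_unitary_root:
  fixes A J :: "'a::{finite,field} mat"
  assumes ASp: "A \<in> Sp_group k J" and J: "J \<in> carrier_mat k k" and det: "det J \<noteq> 0"
    and irr: "irreducible (char_poly A)" and s: "[s * [:0, 1:] = 1] (mod char_poly A)"
  shows "poly_mat r A \<in> Sp_group k J \<and> poly_mat r A ^\<^sub>m M = A \<longleftrightarrow> unitary_root M (char_poly A) s r"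
proof -
  have A: "A \<in> carrier_mat k k" and AJA: "transpose_mat A * J * A = J"
    using ASp by (auto simp: Sp_group_def)
  have "0 < k" using irreducible_degree_pos[OF irr] degree_monic_char_poly[OF A] by simp
  note eq_iff = poly_mat_eq_iff_cong[OF A irr cayley_hamilton[OF A] this]
  have R: "poly_mat r A \<in> carrier_mat k k" and R': "poly_mat (pcompose r s * r) A \<in> carrier_mat k k"
    using A by auto
  have "poly_mat (s * [:0, 1:]) A = poly_mat 1 A" using s eq_iff by blast
  then have "poly_mat s A * A = 1\<^sub>m k"
    by (simp only: poly_mat_mult[OF A] poly_mat_X[OF A] poly_mat_1[OF A])
  then have "transpose_mat (poly_mat r A) * J * poly_mat r A = J * poly_mat (pcompose r s) A * poly_mat r A"
    using transpose_poly_mat_mult[OF A J AJA] by simp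
  also have "\<dots> = J * poly_mat (pcompose r s * r) A"
    using A J by (simp add: poly_mat_mult assoc_mult_mat[of J k k _ k _ k])
  finally have "poly_mat r A \<in> Sp_group k J \<longleftrightarrow> J * poly_mat (pcompose r s * r) A = J * 1\<^sub>m k"
    using R J by (simp add: Sp_group_def)
  also have "\<dots> \<longleftrightarrow> poly_mat (pcompose r s * r) A = poly_mat 1 A"
    using mult_left_cancel_det_nonzero[OF J det R'] A J by (auto simp: poly_mat_1)
  finally have "poly_mat r A \<in> Sp_group k J \<longleftrightarrow> [pcompose r s * r = 1] (mod char_poly A)"
    using eq_iff by simp
  moreover have "poly_mat r A ^\<^sub>m M = A \<longleftrightarrow> [r ^ M = [:0, 1:]] (mod char_poly A)"
    using eq_iff[of "r ^ M" "[:0, 1:]"] A by (simp add: poly_mat_power poly_mat_X)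
  ultimately show ?thesis unfolding unitary_root_def by blast
qed

lemma unitary_root_of_symplectic_root:
  fixes A J \<alpha> :: "'a::{finite,field} mat"
  assumes ASp: "A \<in> Sp_group k J" and J: "J \<in> carrier_mat k k" and det: "det J \<noteq> 0"
    and irr: "irreducible (char_poly A)" and s: "[s * [:0, 1:] = 1] (mod char_poly A)"
    and \<alpha>: "\<alpha> \<in> Sp_group k J" and \<alpha>M: "\<alpha> ^\<^sub>m M = A"
  shows "\<exists>r. unitary_root M (char_poly A) s r \<and> char_poly A dvd pcompose (char_poly \<alpha>) r"
proof -
  have A: "A \<in> carrier_mat k k" and \<alpha>c: "\<alpha> \<in> carrier_mat k k"
    using ASp \<alpha> by (auto simp: Sp_group_def)
  obtain r where r: "\<alpha> = poly_mat r A"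
    using exists_poly_mat_eq_if_irreducible[OF A \<alpha>c _ irr, of "[:0, 1:] ^ M"] \<alpha>M \<alpha>c
    by (auto simp: poly_mat_power poly_mat_X)
  have "poly_mat (pcompose (char_poly \<alpha>) r) A = poly_mat 0 A"
    using cayley_hamilton[OF \<alpha>c] A by (simp add: r poly_mat_pcompose)
  moreover have "0 < k" using irreducible_degree_pos[OF irr] degree_monic_char_poly[OF A] by simp
  ultimately have "[pcompose (char_poly \<alpha>) r = 0] (mod char_poly A)"
    using poly_mat_eq_iff_cong[OF A irr cayley_hamilton[OF A], of _ 0] by simp
  moreover have "unitary_root M (char_poly A) s r"
    using symplectic_root_iff_unitary_root[OF ASp J det irr s] \<alpha> \<alpha>M unfolding r by blast
  ultimately show ?thesis by (auto simp: cong_0_iff)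
qed

theorem corollary5p3:
  fixes A J :: "'a::{finite,field} mat" and M n :: nat
  assumes "M \<ge> 2" and "n \<ge> 1"
    and "nondeg_alternating (2*n) J"
    and "A \<in> Sp_group (2*n) J"
    and "srim (char_poly A)" and "degree (char_poly A) = 2*n"
  shows "(\<exists>\<alpha>\<in>Sp_group (2*n) J. \<alpha> ^\<^sub>m M = A) \<longleftrightarrow> Mstar_power_srim M (char_poly A)"
proof -
  let ?f = "char_poly A"
  have A: "A \<in> carrier_mat (2*n) (2*n)" using assms(4) by (simp add: Sp_group_def)
  have J: "J \<in> carrier_mat (2*n) (2*n)" "det J \<noteq> 0"
    using assms(3) by (auto simp: nondeg_alternating_def)
  have firr: "irreducible ?f" and fsr: "self_reciprocal ?f" and deg: "2 \<le> degree ?f"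
    using assms(2,5,6) by (auto simp: srim_def)
  obtain s where s: "[s * [:0, 1:] = 1] (mod ?f)"
    using cong_inverse_X fsr by (auto simp: self_reciprocal_def)
  show ?thesis
  proof
    assume "\<exists>\<alpha>\<in>Sp_group (2*n) J. \<alpha> ^\<^sub>m M = A"
    then obtain \<alpha> where \<alpha>: "\<alpha> \<in> Sp_group (2*n) J" "\<alpha> ^\<^sub>m M = A" by blast
    then have \<alpha>c: "\<alpha> \<in> carrier_mat (2*n) (2*n)" by (simp add: Sp_group_def)
    obtain r where "unitary_root M ?f s r" "?f dvd pcompose (char_poly \<alpha>) r"
      using unitary_root_of_symplectic_root[OF assms(4) J firr s \<alpha>] by blast
    then have "srim (char_poly \<alpha>) \<and> char_poly \<alpha> dvd pcompose ?f (monom 1 M)"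
      using srim_factor_of_unitary_root[OF firr fsr deg s] degree_monic_char_poly[OF \<alpha>c] assms(6)
      by simp
    then show "Mstar_power_srim M ?f"
      using assms(5,6) degree_monic_char_poly[OF \<alpha>c] deg by (auto simp: Mstar_power_srim_def)
  next
    assume "Mstar_power_srim M ?f"
    then obtain g where "srim g" "degree g = degree ?f" "g dvd pcompose ?f (monom 1 M)"
      by (auto simp: Mstar_power_srim_def)
    then obtain r where "unitary_root M ?f s r"
      using unitary_root_of_srim_factor[OF firr deg _ _ _ _ s] by (auto simp: srim_def)
    then show "\<exists>\<alpha>\<in>Sp_group (2*n) J. \<alpha> ^\<^sub>m M = A"
      using symplectic_root_iff_unitary_root[OF assms(4) J firr s] by auto
  qed
qed

end
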